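(* Let $H(u,v,z,t)=\sum_w u^{\mathrm{asc}(w)}v^{\mathrm{last}(w)}z^{\mathrm{zeros}(w)}t^{\mathrm{length}(w)}$, summed over all nonempty ascent sequences $w$. For $s\ge1$ put $\delta_s=u-(1-t)^s(u-1)$ and $\gamma_s=u-(1-zt)(1-t)^{s-1}(u-1)$, and $\delta_0=1$. Then, as formal power series in $u,z,t$, $$H(u,1,z,t)=\sum_{s\ge0}\frac{zt(1-u)u^s(1-t)^s}{\delta_s\prod_{i=1}^{s+1}\gamma_i}.$$
   Context: An ascent sequence of length $n$ is a sequence $(x_1,\dots,x_n)$ of nonnegative integers with $x_1=0$ and $x_i\in[0,1+\mathrm{asc}(x_1,\dots,x_{i-1})]$ for $2\le i\le n$, where $\mathrm{asc}(y_1,\dots,y_k)=|\{1\le j<k: y_j<y_{j+1}\}|$. For an ascent sequence $w$: $\mathrm{length}(w)$ is its number of entries, $\mathrm{asc}(w)$ its number of ascents, $\mathrm{last}(w)$ its rightmost entry, $\mathrm{zeros}(w)$ its number of entries equal to 0. Each $\delta_s,\gamma_s$ has constant term 1, so the quotients are formal power series, and the $s$-th summand is divisible by $u^s$, so the sum converges formally. *)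

theory Defs
  imports "HOL-Computational_Algebra.Formal_Power_Series"
begin

(* Ascent sequences are lists of naturals; list position i (0-based) holds x_{i+1}. *)

definition asc :: "nat list \<Rightarrow> nat" where
  "asc w = card {j. j + 1 < length w \<and> w ! j < w ! (j + 1)}"

definition zeros :: "nat list \<Rightarrow> nat" where
  "zeros w = card {j. j < length w \<and> w ! j = 0}"

definition is_ascent_seq :: "nat list \<Rightarrow> bool" where
  "is_ascent_seq w \<longleftrightarrow> w \<noteq> [] \<and> w ! 0 = 0 \<and>
     (\<forall>i. 1 \<le> i \<and> i < length w \<longrightarrow> w ! i \<le> 1 + asc (take i w))"

(* Trivariate formal power series in u, z, t with rational coefficients, realised as
   nested univariate series: the outer variable is u, the middle one z, the inner one t. *)
type_synonym fps3 = "rat fps fps fps"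

definition varU :: fps3 where "varU = fps_X"
definition varZ :: fps3 where "varZ = fps_const fps_X"
definition varT :: fps3 where "varT = fps_const (fps_const fps_X)"

definition H_v1 :: fps3 where
  "H_v1 = Abs_fps (\<lambda>a. Abs_fps (\<lambda>b. Abs_fps (\<lambda>n.
     of_nat (card {w. is_ascent_seq w \<and> length w = n \<and> asc w = a \<and> zeros w = b}))))"

definition delta :: "nat \<Rightarrow> fps3" where
  "delta s = (if s = 0 then 1 else varU - (1 - varT) ^ s * (varU - 1))"

definition gamma :: "nat \<Rightarrow> fps3" where
  "gamma s = varU - (1 - varZ * varT) * (1 - varT) ^ (s - 1) * (varU - 1)"

end

theory Submission
  imports Defs
begin

unbundle fps_syntax

text \<open>
  Appending a letter x to a nonempty ascent sequence w multiplies its weight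
  u^asc(w) z^zeros(w) t^length(w) by t, by z if x = 0 and by u if x > last w, where x ranges
  over 0, ..., asc w + 1. Recording the last entry by a catalytic variable v and substituting
  the root v = 1/delta_1 = 1/(1 - t(1-u)) of the kernel, the geometric sums over x telescope,
  and H(u) = H(u,1,z,t) satisfies the functional equation
    H(u) gamma_1 = zt(1-u) + b H(b),   where b = u/delta_1.
  The substitution u := b sends delta_s to delta_(s+1)/delta_1 and gamma_i to
  gamma_(i+1)/delta_1, so the summands T_s of the series satisfy T_0 gamma_1 = zt(1-u) and
  T_(s+1) gamma_1 = b T_s(b). Hence the error E_n of the n-th partial sum satisfies
  E_(n+1) gamma_1 = b E_n(b); as u divides b, u^n divides E_n, and the partial sums converge
  to H in the u-adic topology of fps3.
\<close>

section \<open>Telescoping sums and power series\<close>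

lemma telescoping_powers:
  fixes y T U :: "'a::comm_ring_1"
  assumes y: "y * (1 - T * (1 - U)) = 1" and "l \<le> m"
  shows "(1 - U) * T * (\<Sum>x\<in>{l<..m}. y ^ x) = y ^ m - y ^ l"
  using \<open>l \<le> m\<close>
proof (induction m rule: dec_induct)
  case (step m)
  have "(1 - U) * T * y ^ Suc m = y ^ m * ((1 - U) * T * y)" by (simp add: ac_simps)
  also have "(1 - U) * T * y = y - 1" using y by (simp add: algebra_simps)
  finally have top: "(1 - U) * T * y ^ Suc m = y ^ Suc m - y ^ m" by (simp add: algebra_simps)
  have "{l<..Suc m} = insert (Suc m) {l<..m}" using step.hyps by auto
  then have "(1 - U) * T * (\<Sum>x\<in>{l<..Suc m}. y ^ x)
      = (1 - U) * T * y ^ Suc m + (1 - U) * T * (\<Sum>x\<in>{l<..m}. y ^ x)"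
    by (simp add: algebra_simps)
  then show ?case unfolding top step.IH by (simp add: algebra_simps)
qed simp

lemma kernel_sum:
  fixes y T U Z :: "'a::comm_ring_1"
  assumes y: "y * (1 - T * (1 - U)) = 1" and "l \<le> m"
  shows "(1 - U) * T * (\<Sum>x\<le>m. if x = 0 then Z else if x \<le> l then y ^ x else U * y ^ x)
       = (1 - U) * y ^ l - 1 + U * y ^ m + T * Z * (1 - U)"
proof -
  have split: "{..m} = insert 0 ({0<..l} \<union> {l<..m})" using \<open>l \<le> m\<close> by auto
  have "(\<Sum>x\<le>m. if x = 0 then Z else if x \<le> l then y ^ x else U * y ^ x)
      = Z + (\<Sum>x\<in>{0<..l}. y ^ x) + U * (\<Sum>x\<in>{l<..m}. y ^ x)"
    unfolding split by (simp add: sum.union_disjoint sum_distrib_left add.assoc)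
  then have "(1 - U) * T * (\<Sum>x\<le>m. if x = 0 then Z else if x \<le> l then y ^ x else U * y ^ x)
      = T * Z * (1 - U) + (1 - U) * T * (\<Sum>x\<in>{0<..l}. y ^ x)
        + U * ((1 - U) * T * (\<Sum>x\<in>{l<..m}. y ^ x))"
    by (simp add: algebra_simps)
  also have "\<dots> = T * Z * (1 - U) + (y ^ l - 1) + U * (y ^ m - y ^ l)"
    using telescoping_powers[OF y, of 0 l] telescoping_powers[OF y \<open>l \<le> m\<close>] by simp
  finally show ?thesis by (simp add: algebra_simps)
qed

lemma fps_prod_nth_0: "(prod f A :: 'a::comm_semiring_1 fps) $ 0 = (\<Prod>i\<in>A. f i $ 0)"
  by (induction A rule: infinite_finite_induct) auto

lemma fps_mult_inverse_eq_1:
  fixes f :: "'a::{comm_ring_1,inverse} fps"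
  assumes "f $ 0 * inverse (f $ 0) = 1"
  shows "f * inverse f = 1"
  using fps_right_inverse[of f "inverse (f $ 0)"] assms by (simp add: fps_inverse_def)

lemma fps3_mult_inverse_eq_1:
  fixes f :: "'a::field fps fps fps"
  assumes "f $ 0 $ 0 $ 0 \<noteq> 0"
  shows "f * inverse f = 1"
  by (intro fps_mult_inverse_eq_1) (simp add: assms)

lemma fps_X_power_dvd_compose:
  fixes F b :: "'a::idom fps"
  assumes "fps_X ^ n dvd F" and "fps_X dvd b"
  shows "fps_X ^ n dvd (F oo b)"
proof -
  obtain R where F: "F = fps_X ^ n * R" using assms(1) ..
  have b0: "b $ 0 = 0" using assms(2) by (auto simp: fps_X_mult_nth)
  have "F oo b = b ^ n * (R oo b)"
    by (simp add: F fps_compose_mult_distrib[OF b0] fps_compose_power[OF b0, symmetric] b0)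
  then show ?thesis using assms(2) by (simp add: dvd_mult2 dvd_power_same)
qed

lemma LIMSEQ_fps_if_fps_X_power_dvd:
  fixes F :: "'a::comm_ring_1 fps"
  assumes "\<And>n. fps_X ^ n dvd F - S n"
  shows "S \<longlonglongrightarrow> F"
proof (rule tendsto_fpsI)
  fix k
  show "eventually (\<lambda>n. S n $ k = F $ k) sequentially"
  proof (rule eventually_sequentiallyI)
    fix n assume "Suc k \<le> n"
    obtain R where "F - S n = fps_X ^ n * R" using assms ..
    then have "(F - S n) $ k = 0" using \<open>Suc k \<le> n\<close> by (simp add: fps_X_power_mult_nth)
    then show "S n $ k = F $ k" by simp
  qed
qed

section \<open>Ascent sequences\<close>

lemma asc_snoc:
  assumes "w \<noteq> []"
  shows "asc (w @ [x]) = asc w + (if last w < x then 1 else 0)"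
proof -
  let ?A = "{j. j + 1 < length w \<and> w ! j < w ! (j + 1)}"
  have split: "{j. j + 1 < length (w @ [x]) \<and> (w @ [x]) ! j < (w @ [x]) ! (j + 1)}
      = ?A \<union> (if last w < x then {length w - 1} else {})" (is "?L = ?R")
  proof (rule set_eqI)
    fix j
    show "j \<in> ?L \<longleftrightarrow> j \<in> ?R"
    proof (cases "j + 1 < length w")
      case True
      then show ?thesis by (auto simp: nth_append)
    next
      case False
      with assms show ?thesis
        by (cases "j = length w - 1") (auto simp: nth_append last_conv_nth)
    qed
  qed
  have "finite ?A" by (rule finite_subset[of _ "{..<length w}"]) auto
  with assms show ?thesis unfolding asc_def split by (simp add: card_insert_if)
qed

lemma zeros_snoc: "zeros (w @ [x]) = zeros w + (if x = 0 then 1 else 0)"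
proof -
  let ?A = "{j. j < length w \<and> w ! j = 0}"
  have split: "{j. j < length (w @ [x]) \<and> (w @ [x]) ! j = 0}
      = ?A \<union> (if x = 0 then {length w} else {})"
    by (auto simp: nth_append less_Suc_eq)
  have "finite ?A" by (rule finite_subset[of _ "{..<length w}"]) auto
  then show ?thesis unfolding zeros_def split by (simp add: card_insert_if)
qed

lemma is_ascent_seq_single [simp]: "is_ascent_seq [x] \<longleftrightarrow> x = 0"
  by (simp add: is_ascent_seq_def)

lemma is_ascent_seq_snoc:
  assumes "w \<noteq> []"
  shows "is_ascent_seq (w @ [x]) \<longleftrightarrow> is_ascent_seq w \<and> x \<le> 1 + asc w"
  using assms unfolding is_ascent_seq_def
  by (auto simp: nth_append less_Suc_eq Suc_le_eq)

lemma last_le_asc: "is_ascent_seq w \<Longrightarrow> last w \<le> asc w"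
proof (induction w rule: rev_induct)
  case (snoc x v)
  show ?case
  proof (cases "v = []")
    case False
    with snoc.prems have "is_ascent_seq v" "x \<le> 1 + asc v"
      by (simp_all add: is_ascent_seq_snoc)
    with snoc.IH False show ?thesis by (simp add: asc_snoc)
  qed (use snoc.prems in simp)
qed (simp add: is_ascent_seq_def)

definition asc_seqs_upto :: "nat \<Rightarrow> nat list set" where
  "asc_seqs_upto N = {w. is_ascent_seq w \<and> length w \<le> N}"

lemma asc_seqs_upto_0: "asc_seqs_upto 0 = {}"
  by (auto simp: asc_seqs_upto_def is_ascent_seq_def)

lemma asc_seqs_upto_Suc:
  "asc_seqs_upto (Suc N)
     = insert [0] ((\<lambda>(w, x). w @ [x]) ` (SIGMA w:asc_seqs_upto N. {..Suc (asc w)}))"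
proof (rule set_eqI)
  fix v
  show "v \<in> asc_seqs_upto (Suc N) \<longleftrightarrow>
        v \<in> insert [0] ((\<lambda>(w, x). w @ [x]) ` (SIGMA w:asc_seqs_upto N. {..Suc (asc w)}))"
  proof (cases v rule: rev_cases)
    case (snoc w x)
    show ?thesis
    proof (cases "w = []")
      case False
      have "w @ [x] \<in> (\<lambda>(w, x). w @ [x]) ` (SIGMA w:asc_seqs_upto N. {..Suc (asc w)})
          \<longleftrightarrow> w \<in> asc_seqs_upto N \<and> x \<le> Suc (asc w)"
        by force
      with False show ?thesis by (auto simp: snoc asc_seqs_upto_def is_ascent_seq_snoc)
    qed (auto simp: snoc asc_seqs_upto_def is_ascent_seq_def)
  qed (auto simp: asc_seqs_upto_def is_ascent_seq_def)
qed

lemma finite_asc_seqs_upto: "finite (asc_seqs_upto N)"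
  by (induction N) (auto simp: asc_seqs_upto_0 asc_seqs_upto_Suc)

lemma sum_asc_seqs_upto_Suc:
  "(\<Sum>v\<in>asc_seqs_upto (Suc N). F v)
     = F [0] + (\<Sum>w\<in>asc_seqs_upto N. \<Sum>x\<le>Suc (asc w). F (w @ [x]))"
proof -
  let ?S = "SIGMA w:asc_seqs_upto N. {..Suc (asc w)}"
  have "inj_on (\<lambda>(w, x). w @ [x]) ?S" by (auto simp: inj_on_def)
  moreover have "[0] \<notin> (\<lambda>(w, x). w @ [x]) ` ?S"
    by (auto simp: asc_seqs_upto_def is_ascent_seq_def)
  ultimately have "(\<Sum>v\<in>asc_seqs_upto (Suc N). F v) = F [0] + (\<Sum>(w, x)\<in>?S. F (w @ [x]))"
    by (simp add: asc_seqs_upto_Suc finite_asc_seqs_upto sum.reindex case_prod_unfold)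
  also have "\<dots> = F [0] + (\<Sum>w\<in>asc_seqs_upto N. \<Sum>x\<le>Suc (asc w). F (w @ [x]))"
    by (subst sum.Sigma) (auto simp: finite_asc_seqs_upto)
  finally show ?thesis .
qed

section \<open>The functional equation for \<open>H\<close>\<close>

lemma varT_power_mult_nth:
  "(varT ^ N * F) $ a $ b $ k = (if k < N then 0 else F $ a $ b $ (k - N))"
  by (simp add: varT_def fps_X_power_mult_nth)

lemma varT_power_dvd_iff: "varT ^ N dvd F \<longleftrightarrow> (\<forall>a b k. k < N \<longrightarrow> F $ a $ b $ k = 0)"
proof
  assume "varT ^ N dvd F"
  then show "\<forall>a b k. k < N \<longrightarrow> F $ a $ b $ k = 0" by (auto simp: varT_power_mult_nth)
next
  assume F: "\<forall>a b k. k < N \<longrightarrow> F $ a $ b $ k = 0"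
  define R where "R = Abs_fps (\<lambda>a. Abs_fps (\<lambda>b. Abs_fps (\<lambda>k. F $ a $ b $ (k + N))))"
  have "F = varT ^ N * R" by (auto simp: fps_eq_iff varT_power_mult_nth R_def F)
  then show "varT ^ N dvd F" ..
qed

lemma varT_power_dvd_compose:
  assumes "varT ^ N dvd F" and "b $ 0 = 0"
  shows "varT ^ N dvd (F oo b)"
proof -
  obtain R where "F = varT ^ N * R" using assms(1) ..
  then have "F oo b = varT ^ N * (R oo b)"
    by (simp add: fps_compose_mult_distrib[OF assms(2)] varT_def)
  then show ?thesis ..
qed

lemma zero_if_all_varT_powers_dvd: "(\<And>N. varT ^ N dvd F) \<Longrightarrow> F = 0"
  by (metis fps_ext fps_zero_nth lessI varT_power_dvd_iff)

definition weight :: "nat list \<Rightarrow> fps3" where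
  "weight w = varU ^ asc w * varZ ^ zeros w * varT ^ length w"

lemma weight_nth:
  "weight w $ a $ b $ k = (if asc w = a \<and> zeros w = b \<and> length w = k then 1 else 0)"
proof -
  have "weight w = fps_X ^ asc w * fps_const (fps_X ^ zeros w * fps_const (fps_X ^ length w))"
    by (simp add: weight_def varU_def varZ_def varT_def mult.assoc)
  then show ?thesis
    by (simp add: fps_X_power_mult_nth fps_X_power_mult_right_nth mult.commute[of "fps_X ^ zeros w"])
qed

definition H_upto :: "nat \<Rightarrow> fps3" where
  "H_upto N = (\<Sum>w\<in>asc_seqs_upto N. weight w)"

lemma varT_power_dvd_H_minus_H_upto: "varT ^ Suc N dvd (H_v1 - H_upto N)"
  unfolding varT_power_dvd_iff
proof (intro allI impI)
  fix a b k assume "k < Suc N"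
  then have "{w\<in>asc_seqs_upto N. asc w = a \<and> zeros w = b \<and> length w = k}
      = {w. is_ascent_seq w \<and> length w = k \<and> asc w = a \<and> zeros w = b}"
    by (auto simp: asc_seqs_upto_def)
  then show "(H_v1 - H_upto N) $ a $ b $ k = 0"
    by (simp add: H_v1_def H_upto_def fps_sum_nth weight_nth finite_asc_seqs_upto
        sum.inter_filter[symmetric])
qed

definition kernel_root :: fps3 where
  "kernel_root = inverse (delta 1)"

definition beta :: fps3 where
  "beta = varU * kernel_root"

lemma delta_1: "delta 1 = 1 - varT * (1 - varU)"
  by (simp add: delta_def algebra_simps)

lemma gamma_1: "gamma 1 = 1 - varZ * varT * (1 - varU)"
  by (simp add: gamma_def algebra_simps)

lemma kernel_root_mult_eq_1: "kernel_root * (1 - varT * (1 - varU)) = 1"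
proof -
  have "(1 - varT * (1 - varU)) * inverse (1 - varT * (1 - varU)) = 1"
    by (rule fps3_mult_inverse_eq_1) (simp add: varT_def varU_def)
  then show ?thesis unfolding kernel_root_def delta_1 by (simp add: mult.commute)
qed

lemma beta_times_delta_1: "beta * delta 1 = varU"
  unfolding beta_def delta_1 mult.assoc kernel_root_mult_eq_1 by simp

lemma beta_nth_0: "beta $ 0 = 0"
  by (simp add: beta_def varU_def)

lemma weight_compose_beta: "weight w oo beta = beta ^ asc w * varZ ^ zeros w * varT ^ length w"
  by (simp add: weight_def varU_def varZ_def varT_def beta_nth_0
      fps_compose_mult_distrib[OF beta_nth_0] fps_compose_power[OF beta_nth_0, symmetric])

text \<open>H(u,v,z,t), truncated to lengths at most N, at v = 1/delta_1.\<close>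

definition H_last_upto :: "nat \<Rightarrow> fps3" where
  "H_last_upto N = (\<Sum>w\<in>asc_seqs_upto N. weight w * kernel_root ^ last w)"

lemma sum_appended_weights:
  assumes "is_ascent_seq w"
  shows "(1 - varU) * (\<Sum>x\<le>Suc (asc w). weight (w @ [x]) * kernel_root ^ x)
       = (1 - varU) * (weight w * kernel_root ^ last w) - weight w + beta * (weight w oo beta)
         + varZ * varT * (1 - varU) * weight w"
proof -
  let ?y = kernel_root
  let ?g = "\<lambda>x. if x = 0 then varZ else if x \<le> last w then ?y ^ x else varU * ?y ^ x"
  have "w \<noteq> []" using assms by (auto simp: is_ascent_seq_def)
  then have "weight (w @ [x]) * ?y ^ x = weight w * varT * ?g x" for x
    by (auto simp: weight_def asc_snoc zeros_snoc algebra_simps)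
  then have "(\<Sum>x\<le>Suc (asc w). weight (w @ [x]) * ?y ^ x)
      = weight w * varT * (\<Sum>x\<le>Suc (asc w). ?g x)"
    by (simp only: sum_distrib_left)
  then have "(1 - varU) * (\<Sum>x\<le>Suc (asc w). weight (w @ [x]) * ?y ^ x)
      = weight w * ((1 - varU) * varT * (\<Sum>x\<le>Suc (asc w). ?g x))"
    by (simp only: ac_simps)
  also have "\<dots> = weight w * ((1 - varU) * ?y ^ last w - 1 + varU * ?y ^ Suc (asc w)
                                + varT * varZ * (1 - varU))"
    using kernel_sum[OF kernel_root_mult_eq_1, of "last w" "Suc (asc w)"] last_le_asc[OF assms] by simp
  also have "\<dots> = (1 - varU) * (weight w * ?y ^ last w) - weight w + beta * (weight w oo beta)
                    + varZ * varT * (1 - varU) * weight w"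
  proof -
    have "beta * (weight w oo beta) = varU * ?y ^ Suc (asc w) * weight w"
      unfolding weight_compose_beta by (simp add: weight_def beta_def power_mult_distrib ac_simps)
    then show ?thesis by (simp add: algebra_simps)
  qed
  finally show ?thesis .
qed

lemma weight_single_0: "weight [0] = varZ * varT"
proof -
  have "{j. j < length [0::nat] \<and> [0::nat] ! j = 0} = {0}" by auto
  then show ?thesis by (simp add: weight_def asc_def zeros_def)
qed

lemma H_upto_functional_equation:
  "H_upto N * gamma 1 = varZ * varT * (1 - varU) + beta * (H_upto N oo beta)
     - (1 - varU) * (H_last_upto (Suc N) - H_last_upto N)"
proof -
  have "(1 - varU) * H_last_upto (Suc N)
      = (1 - varU) * (varZ * varT)
        + (\<Sum>w\<in>asc_seqs_upto N.
             (1 - varU) * (\<Sum>x\<le>Suc (asc w). weight (w @ [x]) * kernel_root ^ x))"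
    unfolding H_last_upto_def sum_asc_seqs_upto_Suc
    by (simp add: weight_single_0 distrib_left sum_distrib_left)
  also have "\<dots> = (1 - varU) * (varZ * varT)
        + (\<Sum>w\<in>asc_seqs_upto N. (1 - varU) * (weight w * kernel_root ^ last w) - weight w
             + beta * (weight w oo beta) + varZ * varT * (1 - varU) * weight w)"
    by (intro arg_cong[where f = "(+) _"] sum.cong refl sum_appended_weights)
      (simp add: asc_seqs_upto_def)
  also have "\<dots> = (1 - varU) * (varZ * varT) + (1 - varU) * H_last_upto N - H_upto N
        + beta * (H_upto N oo beta) + varZ * varT * (1 - varU) * H_upto N"
    by (simp add: H_last_upto_def H_upto_def sum.distrib sum_subtractf sum_distrib_left
        fps_compose_sum_distrib)
  finally show ?thesis unfolding gamma_1 by (simp add: algebra_simps)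
qed

lemma varT_power_dvd_H_last_upto_diff: "varT ^ Suc N dvd H_last_upto (Suc N) - H_last_upto N"
proof -
  have "asc_seqs_upto N \<subseteq> asc_seqs_upto (Suc N)" by (auto simp: asc_seqs_upto_def)
  then have "H_last_upto (Suc N) - H_last_upto N
      = (\<Sum>w\<in>asc_seqs_upto (Suc N) - asc_seqs_upto N. weight w * kernel_root ^ last w)"
    by (simp add: H_last_upto_def sum_diff finite_asc_seqs_upto)
  moreover have "varT ^ Suc N dvd weight w" if "w \<in> asc_seqs_upto (Suc N) - asc_seqs_upto N" for w
  proof -
    have "length w = Suc N" using that by (auto simp: asc_seqs_upto_def)
    then show ?thesis by (simp add: weight_def)
  qed
  ultimately show ?thesis by (metis (no_types, lifting) dvd_sum dvd_mult2)
qed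

lemma H_functional_equation:
  "H_v1 * gamma 1 = varZ * varT * (1 - varU) + beta * (H_v1 oo beta)"
proof -
  let ?E = "H_v1 * gamma 1 - varZ * varT * (1 - varU) - beta * (H_v1 oo beta)"
  have E_dvd: "varT ^ Suc N dvd ?E" for N
  proof -
    have "?E = gamma 1 * (H_v1 - H_upto N) - beta * ((H_v1 - H_upto N) oo beta)
               - (1 - varU) * (H_last_upto (Suc N) - H_last_upto N)"
      using H_upto_functional_equation[of N] by (simp add: fps_compose_sub_distrib algebra_simps)
    also have "varT ^ Suc N dvd \<dots>"
      by (intro dvd_diff dvd_mult varT_power_dvd_compose varT_power_dvd_H_minus_H_upto
          varT_power_dvd_H_last_upto_diff beta_nth_0)
    finally show ?thesis .
  qed
  have "varT ^ N dvd ?E" for N by (rule power_le_dvd[OF E_dvd[of N]]) simp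
  then have "?E = 0" by (rule zero_if_all_varT_powers_dvd)
  then show ?thesis by (simp add: algebra_simps)
qed

section \<open>Solving the functional equation\<close>

lemma delta_eq: "delta s = varU - (1 - varT) ^ s * (varU - 1)"
  by (simp add: delta_def)

lemma varU_compose_beta: "varU oo beta = beta"
  by (simp add: varU_def beta_nth_0)

lemma varT_compose_beta: "varT oo beta = varT"
  by (simp add: varT_def)

lemma varZ_compose_beta: "varZ oo beta = varZ"
  by (simp add: varZ_def)

lemmas compose_beta_simps = fps_compose_add_distrib fps_compose_sub_distrib
  fps_compose_mult_distrib[OF beta_nth_0] fps_compose_power[OF beta_nth_0, symmetric]
  varU_compose_beta varT_compose_beta varZ_compose_beta

lemma one_minus_beta_times_delta_1: "(1 - beta) * delta 1 = (1 - varT) * (1 - varU)"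
proof -
  have "(1 - beta) * delta 1 = delta 1 - beta * delta 1" by (simp add: algebra_simps)
  also have "\<dots> = (1 - varT) * (1 - varU)"
    unfolding beta_times_delta_1 unfolding delta_1 by (simp add: algebra_simps)
  finally show ?thesis .
qed

lemma delta_compose_beta: "(delta s oo beta) * delta 1 = delta (Suc s)"
proof -
  have "(delta s oo beta) * delta 1 = beta * delta 1 - (1 - varT) ^ s * (beta * delta 1 - delta 1)"
    unfolding delta_eq[of s] by (simp add: compose_beta_simps algebra_simps)
  also have "\<dots> = delta (Suc s)"
    unfolding beta_times_delta_1 unfolding delta_1 delta_eq[of "Suc s"] by (simp add: algebra_simps)
  finally show ?thesis .
qed

lemma gamma_compose_beta:
  assumes "1 \<le> i"
  shows "(gamma i oo beta) * delta 1 = gamma (Suc i)"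
proof -
  let ?P = "(1 - varZ * varT) * (1 - varT) ^ (i - 1)"
  have "(gamma i oo beta) * delta 1 = beta * delta 1 - ?P * (beta * delta 1 - delta 1)"
    unfolding gamma_def by (simp add: compose_beta_simps algebra_simps)
  also have "\<dots> = gamma (Suc i)"
    using assms unfolding beta_times_delta_1 unfolding delta_1 gamma_def
    by (cases i) (simp_all add: algebra_simps)
  finally show ?thesis .
qed

definition summand_num :: "nat \<Rightarrow> fps3" where
  "summand_num s = varZ * varT * (1 - varU) * varU ^ s * (1 - varT) ^ s"

definition summand_den :: "nat \<Rightarrow> fps3" where
  "summand_den s = delta s * (\<Prod>i\<in>{1..s+1}. gamma i)"

definition summand :: "nat \<Rightarrow> fps3" where
  "summand s = summand_num s * inverse (summand_den s)"

lemma summand_den_mult_inverse: "summand_den s * inverse (summand_den s) = 1"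
  by (rule fps3_mult_inverse_eq_1)
    (simp add: summand_den_def fps_prod_nth_0 delta_eq gamma_def fps_power_zeroth
      varU_def varT_def varZ_def)

lemma summand_num_compose_beta:
  "beta * (summand_num s oo beta) * delta 1 ^ (s + 2) = summand_num (Suc s)"
proof -
  have "beta * (summand_num s oo beta) * delta 1 ^ (s + 2)
      = varZ * varT * (1 - varT) ^ s * (beta * delta 1) ^ (s + 1) * ((1 - beta) * delta 1)"
    unfolding summand_num_def by (simp add: compose_beta_simps power_mult_distrib ac_simps)
  then show ?thesis
    unfolding beta_times_delta_1 one_minus_beta_times_delta_1 summand_num_def by (simp add: ac_simps)
qed

lemma summand_den_compose_beta:
  "(summand_den s oo beta) * delta 1 ^ (s + 2) * gamma 1 = summand_den (Suc s)"
proof -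
  have "(\<Prod>i\<in>{1..s+1}. gamma i oo beta) * delta 1 ^ (s + 1)
      = (\<Prod>i\<in>{1..s+1}. (gamma i oo beta) * delta 1)"
    by (simp add: prod.distrib)
  also have "\<dots> = (\<Prod>i\<in>{1..s+1}. gamma (Suc i))"
    by (intro prod.cong refl gamma_compose_beta) simp
  also have "\<dots> = (\<Prod>i\<in>{Suc 1..Suc (s+1)}. gamma i)"
    by (rule prod.shift_bounds_cl_Suc_ivl[symmetric])
  finally have prod: "(\<Prod>i\<in>{1..s+1}. gamma i oo beta) * delta 1 ^ (s + 1)
      = (\<Prod>i\<in>{Suc 1..Suc (s+1)}. gamma i)" .
  have "(summand_den s oo beta) * delta 1 ^ (s + 2) * gamma 1
      = ((delta s oo beta) * delta 1) * ((\<Prod>i\<in>{1..s+1}. gamma i oo beta) * delta 1 ^ (s + 1))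
        * gamma 1"
    by (simp add: summand_den_def fps_compose_mult_distrib[OF beta_nth_0]
        fps_compose_prod_distrib[OF beta_nth_0] ac_simps)
  also have "\<dots> = delta (Suc s) * (gamma 1 * (\<Prod>i\<in>{Suc 1..Suc (s+1)}. gamma i))"
    unfolding prod delta_compose_beta by (simp add: ac_simps)
  also have "\<dots> = delta (Suc s) * (\<Prod>i\<in>{1..Suc (s+1)}. gamma i)"
  proof -
    have "(\<Prod>i\<in>{1..Suc (s+1)}. gamma i) = gamma 1 * (\<Prod>i\<in>{Suc 1..Suc (s+1)}. gamma i)"
      by (rule prod.atLeast_Suc_atMost) simp
    then show ?thesis by (simp only:)
  qed
  also have "\<dots> = summand_den (Suc s)"
    by (simp add: summand_den_def)
  finally show ?thesis .
qed

lemma summand_0: "summand 0 * gamma 1 = varZ * varT * (1 - varU)"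
proof -
  have "summand 0 * gamma 1 = summand_num 0 * (summand_den 0 * inverse (summand_den 0))"
    by (simp add: summand_def summand_den_def delta_def ac_simps)
  then show ?thesis by (simp add: summand_den_mult_inverse summand_num_def)
qed

lemma summand_Suc: "summand (Suc s) * gamma 1 = beta * (summand s oo beta)"
proof -
  let ?D = "summand_den (Suc s)"
  have "summand (Suc s) * gamma 1 * ?D = summand_num (Suc s) * gamma 1"
    using summand_den_mult_inverse[of "Suc s"] by (simp add: summand_def ac_simps)
  moreover have "beta * (summand s oo beta) * ?D = summand_num (Suc s) * gamma 1"
  proof -
    have "(inverse (summand_den s) oo beta) * (summand_den s oo beta) = 1"
      using summand_den_mult_inverse[of s]
      by (metis fps_compose_1 fps_compose_mult_distrib[OF beta_nth_0] mult.commute)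
    then have "beta * (summand s oo beta) * ?D
        = (beta * (summand_num s oo beta) * delta 1 ^ (s + 2)) * gamma 1"
      unfolding summand_den_compose_beta[symmetric] summand_def
      by (simp add: fps_compose_mult_distrib[OF beta_nth_0] ac_simps)
    then show ?thesis by (simp only: summand_num_compose_beta)
  qed
  ultimately have "summand (Suc s) * gamma 1 * ?D = beta * (summand s oo beta) * ?D" by simp
  then have "summand (Suc s) * gamma 1 * ?D * inverse ?D
      = beta * (summand s oo beta) * ?D * inverse ?D"
    by simp
  then show ?thesis by (simp add: mult.assoc summand_den_mult_inverse)
qed

lemma partial_sum_summand_functional_equation:
  "(\<Sum>s<Suc n. summand s) * gamma 1
     = varZ * varT * (1 - varU) + beta * ((\<Sum>s<n. summand s) oo beta)"
proof -
  have "(\<Sum>s<Suc n. summand s) * gamma 1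
      = summand 0 * gamma 1 + (\<Sum>s<n. summand (Suc s) * gamma 1)"
    by (simp only: sum.lessThan_Suc_shift distrib_right sum_distrib_right)
  then show ?thesis
    by (simp only: summand_0 summand_Suc fps_compose_sum_distrib sum_distrib_left)
qed

lemma fps_X_power_dvd_H_minus_partial_sum: "fps_X ^ n dvd H_v1 - (\<Sum>s<n. summand s)"
proof (induction n)
  case (Suc n)
  let ?E = "H_v1 - (\<Sum>s<Suc n. summand s)"
  have "?E * gamma 1 = beta * ((H_v1 - (\<Sum>s<n. summand s)) oo beta)"
    unfolding left_diff_distrib H_functional_equation partial_sum_summand_functional_equation
    by (simp add: fps_compose_sub_distrib algebra_simps)
  moreover have "fps_X dvd beta" by (simp add: beta_def varU_def)
  ultimately have "fps_X ^ Suc n dvd ?E * gamma 1"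
    using fps_X_power_dvd_compose[OF Suc.IH] by (simp add: mult_dvd_mono)
  then have "fps_X ^ Suc n dvd ?E * gamma 1 * inverse (gamma 1)" by (rule dvd_mult2)
  moreover have "gamma 1 * inverse (gamma 1) = 1"
    by (rule fps3_mult_inverse_eq_1) (simp add: gamma_def varU_def varT_def varZ_def)
  ultimately show ?case by (simp add: mult.assoc)
qed simp

theorem theorem6:
  shows "(\<lambda>s. varZ * varT * (1 - varU) * varU ^ s * (1 - varT) ^ s
            * inverse (delta s * (\<Prod>i\<in>{1..s+1}. gamma i))) sums H_v1"
proof -
  have "(\<lambda>n. \<Sum>s<n. summand s) \<longlonglongrightarrow> H_v1"
    by (rule LIMSEQ_fps_if_fps_X_power_dvd[OF fps_X_power_dvd_H_minus_partial_sum])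
  then show ?thesis by (simp add: sums_def summand_def summand_num_def summand_den_def)
qed

end
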